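(* Let $X$ be a one-sided subshift with $\sigma(X)=X$ such that $Sp_l(X,\sigma)$ is finite. Then \[Sp_l(\widetilde{X},\sigma_{\widetilde{X}})=\imath(Sp_l(X,\sigma)),\] and consequently $|Sp_l(\widetilde{X},\sigma_{\widetilde{X}})|=|Sp_l(X,\sigma)|$.
   Context: $X\subseteq\mathcal{A}^{\mathbb{N}}$ is a closed shift-invariant set over a finite alphabet $\mathcal{A}$, $\sigma$ the left shift. For a continuous map $T$ on a space $Y$, $Sp_l(Y,T)=\{y: |T^{-1}(\{y\})|\ge 2\}$. The cover: for $x\in X$ and $l\ge0$ let $P_l(x)=\{\mu\in\mathcal{L}(X): |\mu|=l,\ \mu x\in X\}$. Let $\mathcal{I}=\{(k,l)\in\mathbb{N}^2: k\le l\}$, ordered by $(k,l)\preceq(k',l')$ iff $k\le k'$ and $l-k\le l'-k'$. For $(k,l)\in\mathcal{I}$ write $x\overset{k,l}{\sim}y$ iff $x_{[0,k)}=y_{[0,k)}$ and $P_l(\sigma^k(x))=P_l(\sigma^k(y))$; let ${}_kX_l=X/\overset{k,l}{\sim}$ (a finite discrete set) with classes ${}_k[x]_l$. For $(k,l)\preceq(k',l')$ the map ${}_{k'}[x]_{l'}\mapsto{}_k[x]_l$ is well defined, and $\widetilde{X}$ is the projective limit of the system $({}_kX_l)_{(k,l)\in\mathcal{I}}$ with these maps: a point is $\tilde{x}=(\tilde{x}_{(k,l)})_{(k,l)\in\mathcal{I}}$ with $\tilde{x}_{(k,l)}\in{}_kX_l$ compatible with the bonding maps, with the projective limit topology. The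 shift $\sigma_{\widetilde{X}}$ is given by $\sigma_{\widetilde{X}}(\tilde{x})_{(k,l)}={}_k[\sigma(z)]_l$ where $z\in X$ is any representative of $\tilde{x}_{(k+1,l+1)}$. The map $\imath:X\to\widetilde{X}$ is $\imath(x)=({}_k[x]_l)_{(k,l)\in\mathcal{I}}$ (injective). $\sigma_{\widetilde{X}}$ is a surjective local homeomorphism of the compact zero-dimensional metrizable space $\widetilde{X}$. *)

theory Defs
  imports "HOL-Analysis.Analysis"
begin

definition shift :: "(nat \<Rightarrow> 'a) \<Rightarrow> (nat \<Rightarrow> 'a)" where
  "shift x = (\<lambda>n. x (Suc n))"

definition fullshift_top :: "(nat \<Rightarrow> 'a) topology" where
  "fullshift_top = product_topology (\<lambda>_. discrete_topology (UNIV :: 'a set)) UNIV"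

definition is_subshift :: "(nat \<Rightarrow> 'a) set \<Rightarrow> bool" where
  "is_subshift X \<longleftrightarrow> closedin fullshift_top X \<and> shift ` X \<subseteq> X"

definition language :: "(nat \<Rightarrow> 'a) set \<Rightarrow> 'a list set" where
  "language X = {w. \<exists>x\<in>X. \<exists>i. w = map x [i..<i + length w]}"

definition conc :: "'a list \<Rightarrow> (nat \<Rightarrow> 'a) \<Rightarrow> (nat \<Rightarrow> 'a)" where
  "conc \<mu> x = (\<lambda>n. if n < length \<mu> then \<mu> ! n else x (n - length \<mu>))"

definition Pset :: "(nat \<Rightarrow> 'a) set \<Rightarrow> nat \<Rightarrow> (nat \<Rightarrow> 'a) \<Rightarrow> 'a list set" where
  "Pset X l x = {\<mu> \<in> language X. length \<mu> = l \<and> conc \<mu> x \<in> X}"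

definition kl_rel :: "(nat \<Rightarrow> 'a) set \<Rightarrow> nat \<Rightarrow> nat \<Rightarrow> (nat \<Rightarrow> 'a) \<Rightarrow> (nat \<Rightarrow> 'a) \<Rightarrow> bool" where
  "kl_rel X k l x y \<longleftrightarrow> (\<forall>i<k. x i = y i) \<and> Pset X l ((shift ^^ k) x) = Pset X l ((shift ^^ k) y)"

definition kl_class :: "(nat \<Rightarrow> 'a) set \<Rightarrow> nat \<Rightarrow> nat \<Rightarrow> (nat \<Rightarrow> 'a) \<Rightarrow> (nat \<Rightarrow> 'a) set" where
  "kl_class X k l x = {y \<in> X. kl_rel X k l x y}"

definition kl_quot :: "(nat \<Rightarrow> 'a) set \<Rightarrow> nat \<Rightarrow> nat \<Rightarrow> (nat \<Rightarrow> 'a) set set" where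
  "kl_quot X k l = kl_class X k l ` X"

definition idx :: "(nat \<times> nat) set" where
  "idx = {(k, l). k \<le> l}"

definition idx_le :: "nat \<times> nat \<Rightarrow> nat \<times> nat \<Rightarrow> bool" where
  "idx_le p q \<longleftrightarrow> fst p \<le> fst q \<and> snd p - fst p \<le> snd q - fst q"

text \<open>Points of the projective limit: compatible families of classes, indexed by idx
  (extended by the empty set outside idx for uniqueness of representation).
  Compatibility: the bonding map sends {}_{k'}[z]_{l'} to {}_k[z]_l.\<close>
definition Xtilde :: "(nat \<Rightarrow> 'a) set \<Rightarrow> (nat \<times> nat \<Rightarrow> (nat \<Rightarrow> 'a) set) set" where
  "Xtilde X = {f. (\<forall>p. p \<notin> idx \<longrightarrow> f p = {})
     \<and> (\<forall>(k, l)\<in>idx. f (k, l) \<in> kl_quot X k l)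
     \<and> (\<forall>(k, l)\<in>idx. \<forall>(k', l')\<in>idx. idx_le (k, l) (k', l') \<longrightarrow>
          (\<forall>z\<in>f (k', l'). f (k, l) = kl_class X k l z))}"

definition shift_tilde :: "(nat \<Rightarrow> 'a) set \<Rightarrow> (nat \<times> nat \<Rightarrow> (nat \<Rightarrow> 'a) set)
    \<Rightarrow> (nat \<times> nat \<Rightarrow> (nat \<Rightarrow> 'a) set)" where
  "shift_tilde X f = (\<lambda>(k, l). if k \<le> l
      then kl_class X k l (shift (SOME z. z \<in> f (Suc k, Suc l))) else {})"

definition iota :: "(nat \<Rightarrow> 'a) set \<Rightarrow> (nat \<Rightarrow> 'a) \<Rightarrow> (nat \<times> nat \<Rightarrow> (nat \<Rightarrow> 'a) set)" where
  "iota X x = (\<lambda>(k, l). if k \<le> l then kl_class X k l x else {})"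

definition Sp_l :: "'b set \<Rightarrow> ('b \<Rightarrow> 'b) \<Rightarrow> 'b set" where
  "Sp_l Y T = {y \<in> Y. \<exists>a\<in>Y. \<exists>b\<in>Y. a \<noteq> b \<and> T a = y \<and> T b = y}"

end

theory Submission
  imports Defs
begin

text \<open>
  A point f of the cover with two distinct preimages g, h under the shift has preimages whose
  shifts agree, so g and h must differ in their first letters a and b. By surjectivity of the
  shift, every y in a component f(k, l) with k < l then extends both to ay and to by in X, so all
  these components lie in the finite set Sp_l(X, shift). Finitely many sequences are separated by a
  finite prefix, which forces f = iota x for a single x in Sp_l(X, shift). Conversely iota is
  injective and intertwines the two shifts, so it maps Sp_l(X, shift) into the branch set of the
  cover.
\<close>

lemma funpow_shift_eq: "(shift ^^ n) x = (\<lambda>i. x (i + n))"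
  by (induction n arbitrary: x) (auto simp: shift_def)

lemma tail_mem:
  assumes "shift ` X \<subseteq> X" "v \<in> X"
  shows "(\<lambda>i. v (i + n)) \<in> X"
proof (induction n)
  case (Suc n)
  then have "shift (\<lambda>i. v (i + n)) \<in> X" using assms(1) by blast
  then show ?case by (simp add: shift_def)
qed (use assms in simp)

lemma tail_preimage:
  assumes "shift ` X = X" "v \<in> X"
  shows "\<exists>u\<in>X. (\<lambda>i. u (i + n)) = v"
proof (induction n)
  case (Suc n)
  then obtain u' where u': "u' \<in> X" "(\<lambda>i. u' (i + n)) = v" by blast
  then obtain u where "u \<in> X" "shift u = u'" using assms(1) by (metis imageE)
  then show ?case using u' by (auto simp: shift_def)
qed (use assms in simp)

lemma conc_append: "conc (u @ v) q = conc u (conc v q)"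
  by (auto simp: conc_def nth_append fun_eq_iff)

lemma tail_conc: "(\<lambda>i. conc u q (i + length u)) = q"
  by (simp add: conc_def)

lemma conc_map_upt: "k \<le> k' \<Longrightarrow> conc (map x [k..<k']) (\<lambda>i. x (i + k')) = (\<lambda>i. x (i + k))"
  by (auto simp: conc_def fun_eq_iff add.commute)

lemma map_conc_upt: "map (conc u q) [0..<length u] = u"
  by (rule nth_equalityI) (auto simp: conc_def)

lemma shift_conc_Cons: "shift (conc [c] y) = y"
  by (simp add: shift_def conc_def)

lemma Pset_eq: "Pset X l q = {\<mu>. length \<mu> = l \<and> conc \<mu> q \<in> X}"
proof -
  have "\<mu> \<in> language X" if "conc \<mu> q \<in> X" for \<mu>
  proof -
    have "\<mu> = map (conc \<mu> q) [0..<0 + length \<mu>]" by (simp add: map_conc_upt)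
    then show ?thesis unfolding language_def using that by blast
  qed
  then show ?thesis by (auto simp: Pset_def)
qed

lemma conc_mem_iff_prolongable:
  assumes "shift ` X = X"
  shows "conc \<mu> q \<in> X \<longleftrightarrow> (\<exists>\<nu>. length \<nu> = m \<and> conc (\<nu> @ \<mu>) q \<in> X)"
proof
  assume "conc \<mu> q \<in> X"
  then obtain u where u: "u \<in> X" "(\<lambda>i. u (i + m)) = conc \<mu> q"
    using tail_preimage[OF assms \<open>conc \<mu> q \<in> X\<close>] by blast
  have "u = conc (map u [0..<m]) (\<lambda>i. u (i + m))"
    using conc_map_upt[of 0 m u] by simp
  then show "\<exists>\<nu>. length \<nu> = m \<and> conc (\<nu> @ \<mu>) q \<in> X"
    using u by (intro exI[of _ "map u [0..<m]"]) (simp add: conc_append)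
next
  assume "\<exists>\<nu>. length \<nu> = m \<and> conc (\<nu> @ \<mu>) q \<in> X"
  then obtain \<nu> where "conc \<nu> (conc \<mu> q) \<in> X" by (auto simp: conc_append)
  from tail_mem[OF _ this, of "length \<nu>"] assms show "conc \<mu> q \<in> X"
    by (simp add: tail_conc)
qed

lemma Pset_eq_mono:
  assumes surj: "shift ` X = X"
    and P: "Pset X l' (\<lambda>i. x (i + k')) = Pset X l' (\<lambda>i. z (i + k'))"
    and agree: "\<And>i. k \<le> i \<Longrightarrow> i < k' \<Longrightarrow> x i = z i"
    and "k \<le> k'" and "l + (k' - k) \<le> l'"
  shows "Pset X l (\<lambda>i. x (i + k)) = Pset X l (\<lambda>i. z (i + k))"
proof -
  define w where "w = map x [k..<k']"
  define m where "m = l' - (l + (k' - k))"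
  have w_z: "w = map z [k..<k']"
    unfolding w_def by (rule map_cong) (use agree in auto)
  have "\<mu> \<in> Pset X l (\<lambda>i. y (i + k)) \<longleftrightarrow>
      length \<mu> = l \<and> (\<exists>\<nu>. length \<nu> = m \<and> \<nu> @ \<mu> @ w \<in> Pset X l' (\<lambda>i. y (i + k')))"
    if "w = map y [k..<k']" for y \<mu>
  proof -
    let ?q = "\<lambda>i. y (i + k')"
    have "(\<lambda>i. y (i + k)) = conc w ?q"
      using that conc_map_upt[OF \<open>k \<le> k'\<close>, of y] by simp
    then have "\<mu> \<in> Pset X l (\<lambda>i. y (i + k)) \<longleftrightarrow> length \<mu> = l \<and> conc \<mu> (conc w ?q) \<in> X"
      by (simp add: Pset_eq)
    also have "\<dots> \<longleftrightarrow> length \<mu> = l \<and> (\<exists>\<nu>. length \<nu> = m \<and> conc (\<nu> @ \<mu> @ w) ?q \<in> X)"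
      using conc_mem_iff_prolongable[OF surj, of \<mu> "conc w ?q" m] by (simp add: conc_append)
    also have "\<dots> \<longleftrightarrow> length \<mu> = l \<and> (\<exists>\<nu>. length \<nu> = m \<and> \<nu> @ \<mu> @ w \<in> Pset X l' ?q)"
    proof -
      have "length \<nu> = m \<Longrightarrow> length (\<nu> @ \<mu> @ w) = l' \<longleftrightarrow> length \<mu> = l" for \<nu>
        using assms(4,5) by (auto simp: m_def w_def)
      then show ?thesis by (auto simp: Pset_eq)
    qed
    finally show ?thesis .
  qed
  from this[OF w_def] this[OF w_z] show ?thesis
    unfolding P by blast
qed

lemma kl_rel_iff:
  "kl_rel X k l x y \<longleftrightarrow> (\<forall>i<k. x i = y i) \<and> Pset X l (\<lambda>i. x (i + k)) = Pset X l (\<lambda>i. y (i + k))"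
  by (simp add: kl_rel_def funpow_shift_eq)

lemma kl_rel_Suc_iff:
  "kl_rel X (Suc k) l x y \<longleftrightarrow> x 0 = y 0 \<and> kl_rel X k l (shift x) (shift y)"
proof -
  have "(\<forall>i<Suc k. x i = y i) \<longleftrightarrow> x 0 = y 0 \<and> (\<forall>i<k. shift x i = shift y i)"
    by (auto simp: shift_def less_Suc_eq_0_disj)
  moreover have "(\<lambda>i. v (i + Suc k)) = (\<lambda>i. shift v (i + k))" for v :: "nat \<Rightarrow> 'a"
    by (simp add: shift_def)
  ultimately show ?thesis by (simp add: kl_rel_iff)
qed

text \<open>Well-definedness of the bonding maps; this needs surjectivity of the shift.\<close>
lemma kl_rel_mono:
  assumes "shift ` X = X" "kl_rel X k' l' x z" "k \<le> k'" "l + (k' - k) \<le> l'"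
  shows "kl_rel X k l x z"
  using assms(2-4) Pset_eq_mono[OF assms(1), of l' x k' z k l] by (auto simp: kl_rel_iff)

lemma kl_rel_shift:
  assumes "shift ` X = X" "kl_rel X (Suc k) (Suc l) x z"
  shows "kl_rel X k l (shift x) (shift z)"
  using kl_rel_mono[OF assms, of "Suc k" l] by (simp add: kl_rel_Suc_iff)

lemma kl_rel_mem:
  assumes surj: "shift ` X = X" and "kl_rel X k l x y" "x \<in> X" "k \<le> l"
  shows "y \<in> X"
proof -
  have agree: "map x [0..<k] = map y [0..<k]" and
    P: "Pset X l (\<lambda>i. x (i + k)) = Pset X l (\<lambda>i. y (i + k))"
    using assms(2) by (auto simp: kl_rel_iff)
  have "conc (map x [0..<k]) (\<lambda>i. x (i + k)) \<in> X"
    using \<open>x \<in> X\<close> conc_map_upt[of 0 k x] by simp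
  then obtain \<nu> where "length \<nu> = l - k" "conc (\<nu> @ map x [0..<k]) (\<lambda>i. x (i + k)) \<in> X"
    using conc_mem_iff_prolongable[OF surj] by blast
  then have "\<nu> @ map y [0..<k] \<in> Pset X l (\<lambda>i. y (i + k))"
    using P agree \<open>k \<le> l\<close> by (auto simp: Pset_eq)
  then have "conc (map y [0..<k]) (\<lambda>i. y (i + k)) \<in> X"
    using conc_mem_iff_prolongable[OF surj] by (auto simp: Pset_eq)
  then show "y \<in> X"
    using conc_map_upt[of 0 k y] by simp
qed

lemma kl_class_self: "x \<in> X \<Longrightarrow> x \<in> kl_class X k l x"
  by (simp add: kl_class_def kl_rel_def)

lemma kl_class_eq: "kl_rel X k l x y \<Longrightarrow> kl_class X k l x = kl_class X k l y"
  by (auto simp: kl_class_def kl_rel_def)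

lemma kl_class_eq_iff: "y \<in> X \<Longrightarrow> kl_class X k l x = kl_class X k l y \<longleftrightarrow> kl_rel X k l x y"
  using kl_class_self[of y X k l] kl_class_eq[of X k l x y] by (auto simp: kl_class_def)

lemma Xtilde_component:
  assumes "f \<in> Xtilde X" "k \<le> l"
  obtains x where "x \<in> X" "f (k, l) = kl_class X k l x"
proof -
  have "f (k, l) \<in> kl_quot X k l" using assms unfolding Xtilde_def idx_def by auto
  then show thesis using that unfolding kl_quot_def by blast
qed

lemma Xtilde_component_nonempty: "f \<in> Xtilde X \<Longrightarrow> k \<le> l \<Longrightarrow> \<exists>x. x \<in> f (k, l)"
  by (metis Xtilde_component kl_class_self)

lemma Xtilde_component_empty: "f \<in> Xtilde X \<Longrightarrow> \<not> k \<le> l \<Longrightarrow> f (k, l) = {}"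
  unfolding Xtilde_def idx_def by auto

lemma Xtilde_component_subset:
  assumes "f \<in> Xtilde X"
  shows "f (k, l) \<subseteq> X"
proof (cases "k \<le> l")
  case True
  then obtain x where "f (k, l) = kl_class X k l x" using Xtilde_component[OF assms] by metis
  then show ?thesis by (simp add: kl_class_def)
qed (simp add: Xtilde_component_empty[OF assms])

lemma Xtilde_component_eq_class:
  assumes f: "f \<in> Xtilde X" and "k \<le> l" "k \<le> k'" "l - k \<le> l' - k'" and z: "z \<in> f (k', l')"
  shows "f (k, l) = kl_class X k l z"
proof -
  have "k' \<le> l'" using Xtilde_component_empty[OF f, of k' l'] z by auto
  then have "(k, l) \<in> idx" "(k', l') \<in> idx" "idx_le (k, l) (k', l')"
    using assms by (auto simp: idx_def idx_le_def)
  moreover have "\<forall>(k, l)\<in>idx. \<forall>(k', l')\<in>idx. idx_le (k, l) (k', l') \<longrightarrow>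
      (\<forall>z\<in>f (k', l'). f (k, l) = kl_class X k l z)"
    using f unfolding Xtilde_def by blast
  ultimately show ?thesis using z by fastforce
qed

lemma Xtilde_first_letter:
  assumes "f \<in> Xtilde X" "0 < k" "z \<in> f (k, l)" "p \<in> f (1, 1)"
  shows "z 0 = p 0"
proof -
  have "f (1, 1) = kl_class X 1 1 z"
    using Xtilde_component_eq_class[OF assms(1) _ _ _ assms(3)] assms(2) by simp
  then show ?thesis using assms(4) by (simp add: kl_class_def kl_rel_def)
qed

lemma shift_tilde_component:
  assumes surj: "shift ` X = X" and f: "f \<in> Xtilde X" and "k \<le> l"
    and z: "z \<in> f (Suc k, Suc l)"
  shows "shift_tilde X f (k, l) = kl_class X k l (shift z)"
proof -
  define z' where "z' = (SOME z'. z' \<in> f (Suc k, Suc l))"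
  have "z' \<in> f (Suc k, Suc l)"
    unfolding z'_def by (rule someI[of "\<lambda>z'. z' \<in> f (Suc k, Suc l)" z]) (rule z)
  moreover have "f (Suc k, Suc l) = kl_class X (Suc k) (Suc l) z"
    using Xtilde_component_eq_class[OF f _ _ _ z] \<open>k \<le> l\<close> by simp
  ultimately have "kl_rel X (Suc k) (Suc l) z z'"
    by (simp add: kl_class_def)
  then have "kl_class X k l (shift z) = kl_class X k l (shift z')"
    by (intro kl_class_eq kl_rel_shift[OF surj])
  then show ?thesis
    using \<open>k \<le> l\<close> by (simp add: shift_tilde_def z'_def)
qed

lemma iota_mem_Xtilde:
  assumes surj: "shift ` X = X" and "x \<in> X"
  shows "iota X x \<in> Xtilde X"
proof -
  have "iota X x (k, l) = kl_class X k l z"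
    if "k \<le> l" "k' \<le> l'" "idx_le (k, l) (k', l')" "z \<in> iota X x (k', l')" for k l k' l' z
  proof -
    have "kl_rel X k' l' x z" using that(2,4) by (simp add: iota_def kl_class_def)
    then have "kl_rel X k l x z"
      by (rule kl_rel_mono[OF surj]) (use that(1-3) in \<open>auto simp: idx_le_def\<close>)
    then show ?thesis using that(1) by (simp add: iota_def kl_class_eq)
  qed
  then show ?thesis
    using \<open>x \<in> X\<close> unfolding Xtilde_def by (auto simp: idx_def iota_def kl_quot_def)
qed

lemma shift_tilde_iota:
  assumes surj: "shift ` X = X" and "x \<in> X"
  shows "shift_tilde X (iota X x) = iota X (shift x)"
proof (rule ext, clarify)
  fix k l
  show "shift_tilde X (iota X x) (k, l) = iota X (shift x) (k, l)"
  proof (cases "k \<le> l")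
    case True
    have "x \<in> iota X x (Suc k, Suc l)" using True \<open>x \<in> X\<close> by (simp add: iota_def kl_class_self)
    then have "shift_tilde X (iota X x) (k, l) = kl_class X k l (shift x)"
      by (rule shift_tilde_component[OF surj iota_mem_Xtilde[OF assms] True])
    with True show ?thesis by (simp add: iota_def)
  qed (simp add: shift_tilde_def iota_def)
qed

lemma inj_on_iota: "inj_on (iota X) X"
proof (rule inj_onI)
  fix x y assume "x \<in> X" "y \<in> X" and eq: "iota X x = iota X y"
  show "x = y"
  proof (rule ext)
    fix i
    have "kl_class X (Suc i) (Suc i) x = kl_class X (Suc i) (Suc i) y"
      using fun_cong[OF eq, of "(Suc i, Suc i)"] by (simp add: iota_def)
    then show "x i = y i"
      using kl_class_eq_iff[OF \<open>y \<in> X\<close>] by (simp add: kl_rel_def)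
  qed
qed

lemma Xtilde_eqI:
  assumes g: "g \<in> Xtilde X" and h: "h \<in> Xtilde X"
    and eq: "\<And>k l. 0 < k \<Longrightarrow> k \<le> l \<Longrightarrow> g (k, l) = h (k, l)"
  shows "g = h"
proof (rule ext, clarify)
  fix k l :: nat
  consider "\<not> k \<le> l" | "0 < k" "k \<le> l" | "k = 0" by linarith
  then show "g (k, l) = h (k, l)"
  proof cases
    case 1
    then show ?thesis using Xtilde_component_empty g h by metis
  next
    case 2
    then show ?thesis by (rule eq)
  next
    case 3
    obtain z where z: "z \<in> g (1, Suc l)" using Xtilde_component_nonempty[OF g] by fastforce
    moreover have "z \<in> h (1, Suc l)" using z eq[of 1 "Suc l"] by simp
    ultimately show ?thesis
      using Xtilde_component_eq_class[OF g, of 0 l 1 "Suc l" z]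
        Xtilde_component_eq_class[OF h, of 0 l 1 "Suc l" z] 3
      by simp
  qed
qed

lemma Xtilde_eq_if_shift_tilde_eq:
  assumes surj: "shift ` X = X" and g: "g \<in> Xtilde X" and h: "h \<in> Xtilde X"
    and shift_eq: "shift_tilde X g = shift_tilde X h"
    and p: "p \<in> g (1, 1)" and q: "q \<in> h (1, 1)" and "p 0 = q 0"
  shows "g = h"
proof (rule Xtilde_eqI[OF g h])
  fix k l :: nat assume "0 < k" "k \<le> l"
  then obtain j where k: "k = Suc j" and "j \<le> l" using gr0_implies_Suc by fastforce
  obtain z where z: "z \<in> g (k, Suc l)" using Xtilde_component_nonempty[OF g] \<open>k \<le> l\<close> by fastforce
  obtain w where w: "w \<in> h (k, Suc l)" using Xtilde_component_nonempty[OF h] \<open>k \<le> l\<close> by fastforce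
  have "shift w \<in> X"
    using Xtilde_component_subset[OF h] w imageI[of w X shift] surj by auto
  moreover have "kl_class X j l (shift z) = kl_class X j l (shift w)"
    using shift_eq z w k
      shift_tilde_component[OF surj g \<open>j \<le> l\<close>] shift_tilde_component[OF surj h \<open>j \<le> l\<close>]
    by simp
  ultimately have "kl_rel X j l (shift z) (shift w)" by (simp add: kl_class_eq_iff)
  moreover have "z 0 = w 0"
    using Xtilde_first_letter[OF g _ z p] Xtilde_first_letter[OF h _ w q] \<open>p 0 = q 0\<close> k by simp
  ultimately have "kl_class X k l z = kl_class X k l w"
    using kl_rel_Suc_iff k by (metis kl_class_eq)
  then show "g (k, l) = h (k, l)"
    using Xtilde_component_eq_class[OF g _ _ _ z] Xtilde_component_eq_class[OF h _ _ _ w] \<open>k \<le> l\<close>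
    by simp
qed

lemma conc_first_letter_mem:
  assumes surj: "shift ` X = X" and g: "g \<in> Xtilde X" and "k < l"
    and y: "y \<in> shift_tilde X g (k, l)" and p: "p \<in> g (1, 1)"
  shows "conc [p 0] y \<in> X"
proof -
  obtain z where z: "z \<in> g (Suc k, Suc l)"
    using Xtilde_component_nonempty[OF g] \<open>k < l\<close> by fastforce
  have "kl_rel X k l (shift z) y"
    using y shift_tilde_component[OF surj g _ z] \<open>k < l\<close> by (simp add: kl_class_def)
  moreover have "z 0 = p 0" using Xtilde_first_letter[OF g _ z p] by simp
  ultimately have "kl_rel X (Suc k) l z (conc [p 0] y)"
    by (simp add: kl_rel_Suc_iff shift_conc_Cons) (simp add: conc_def)
  moreover have "z \<in> X" using Xtilde_component_subset[OF g] z by blast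
  ultimately show ?thesis using kl_rel_mem[OF surj] \<open>k < l\<close> by simp
qed

lemma Sp_l_subset: "Sp_l Y T \<subseteq> Y"
  by (auto simp: Sp_l_def)

lemma image_Sp_l_subset:
  assumes "inj_on F Y" "F ` Y \<subseteq> Z" "\<And>y. y \<in> Y \<Longrightarrow> T' (F y) = F (T y)"
  shows "F ` Sp_l Y T \<subseteq> Sp_l Z T'"
proof
  fix z assume "z \<in> F ` Sp_l Y T"
  then obtain a b where ab: "a \<in> Y" "b \<in> Y" "a \<noteq> b" "z = F (T a)" "T b = T a" "T a \<in> Y"
    unfolding Sp_l_def by blast
  then have "F a \<noteq> F b" "F a \<in> Z" "F b \<in> Z" "z \<in> Z" "T' (F a) = z" "T' (F b) = z"
    using assms inj_onD by (metis image_subset_iff)+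
  then show "z \<in> Sp_l Z T'"
    unfolding Sp_l_def by blast
qed

lemma finite_separated_by_prefix:
  fixes S :: "(nat \<Rightarrow> 'a) set"
  assumes "finite S"
  obtains K where "\<And>u v. u \<in> S \<Longrightarrow> v \<in> S \<Longrightarrow> (\<forall>i<K. u i = v i) \<Longrightarrow> u = v"
proof -
  define d :: "(nat \<Rightarrow> 'a) \<times> (nat \<Rightarrow> 'a) \<Rightarrow> nat"
    where "d = (\<lambda>(u, v). SOME i. u i \<noteq> v i)"
  have "finite (d ` (S \<times> S))" using assms by simp
  then obtain K where K: "d ` (S \<times> S) \<subseteq> {..<K}" using finite_nat_bounded by blast
  show thesis
  proof (rule that)
    fix u v assume "u \<in> S" "v \<in> S" and agree: "\<forall>i<K. u i = v i"
    show "u = v"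
    proof (rule ccontr)
      assume "u \<noteq> v"
      then have "u (d (u, v)) \<noteq> v (d (u, v))"
        unfolding d_def by (simp add: fun_eq_iff) (rule someI_ex)
      moreover have "d (u, v) < K" using K \<open>u \<in> S\<close> \<open>v \<in> S\<close> by blast
      ultimately show False using agree by blast
    qed
  qed
qed

lemma Xtilde_eq_iota:
  assumes f: "f \<in> Xtilde X" and "finite S"
    and S: "\<And>k l. k < l \<Longrightarrow> f (k, l) \<subseteq> S"
  shows "\<exists>x\<in>S. f = iota X x"
proof -
  obtain K where K: "\<And>u v. u \<in> S \<Longrightarrow> v \<in> S \<Longrightarrow> (\<forall>i<K. u i = v i) \<Longrightarrow> u = v"
    using finite_separated_by_prefix[OF \<open>finite S\<close>] by blast
  obtain x where x: "x \<in> f (K, Suc K)" using Xtilde_component_nonempty[OF f] by fastforce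
  have "x \<in> S" using S[of K "Suc K"] x by blast
  have "f = iota X x"
  proof (rule ext, clarify)
    fix k l :: nat
    show "f (k, l) = iota X x (k, l)"
    proof (cases "k \<le> l")
      case True
      define k' where "k' = max k K"
      define l' where "l' = k' + (l - k) + 1"
      obtain y where y: "y \<in> f (k', l')"
        using Xtilde_component_nonempty[OF f, of k' l'] by (auto simp: l'_def)
      have "y \<in> S" using S[of k' l'] y by (auto simp: l'_def)
      have "f (K, Suc K) = kl_class X K (Suc K) y"
        by (rule Xtilde_component_eq_class[OF f _ _ _ y]) (auto simp: k'_def l'_def)
      then have "\<forall>i<K. y i = x i" using x by (simp add: kl_class_def kl_rel_def)
      then have "y = x" using K \<open>y \<in> S\<close> \<open>x \<in> S\<close> by blast
      moreover have "f (k, l) = kl_class X k l y"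
        by (rule Xtilde_component_eq_class[OF f _ _ _ y]) (use True in \<open>auto simp: k'_def l'_def\<close>)
      ultimately show ?thesis using True by (simp add: iota_def)
    qed (simp add: Xtilde_component_empty[OF f] iota_def)
  qed
  then show ?thesis using \<open>x \<in> S\<close> by blast
qed

text \<open>Two distinct preimages of a point of the cover differ in their first letter, so every
  point of its components with k < l can be prolonged to the left in two ways.\<close>
lemma Sp_l_Xtilde_component_subset:
  assumes surj: "shift ` X = X" and "f \<in> Sp_l (Xtilde X) (shift_tilde X)" and "k < l"
  shows "f (k, l) \<subseteq> Sp_l X shift"
proof
  obtain g h where g: "g \<in> Xtilde X" and h: "h \<in> Xtilde X" and "g \<noteq> h"
    and fg: "shift_tilde X g = f" and fh: "shift_tilde X h = f"
    using assms(2) unfolding Sp_l_def by blast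
  obtain p q where p: "p \<in> g (1, 1)" and q: "q \<in> h (1, 1)"
    using Xtilde_component_nonempty[OF g] Xtilde_component_nonempty[OF h] by fastforce
  have "p 0 \<noteq> q 0"
    using Xtilde_eq_if_shift_tilde_eq[OF surj g h _ p q] fg fh \<open>g \<noteq> h\<close> by metis
  fix y assume "y \<in> f (k, l)"
  then have "conc [p 0] y \<in> X" "conc [q 0] y \<in> X"
    using conc_first_letter_mem[OF surj g \<open>k < l\<close> _ p]
      conc_first_letter_mem[OF surj h \<open>k < l\<close> _ q] fg fh
    by simp_all
  moreover have "y \<in> X"
    using imageI[OF \<open>conc [p 0] y \<in> X\<close>, of shift] surj by (simp add: shift_conc_Cons)
  moreover have "conc [p 0] y \<noteq> conc [q 0] y"
    using \<open>p 0 \<noteq> q 0\<close> by (auto simp: conc_def fun_eq_iff)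
  ultimately show "y \<in> Sp_l X shift"
    unfolding Sp_l_def using shift_conc_Cons[of "p 0" y] shift_conc_Cons[of "q 0" y] by blast
qed

theorem corollary3p3:
  fixes X :: "(nat \<Rightarrow> 'a::finite) set"
  assumes "is_subshift X"
    and "shift ` X = X"
    and "finite (Sp_l X shift)"
  shows "Sp_l (Xtilde X) (shift_tilde X) = iota X ` Sp_l X shift
    \<and> card (Sp_l (Xtilde X) (shift_tilde X)) = card (Sp_l X shift)"
proof -
  have "Sp_l (Xtilde X) (shift_tilde X) \<subseteq> iota X ` Sp_l X shift"
  proof
    fix f assume f: "f \<in> Sp_l (Xtilde X) (shift_tilde X)"
    then have "f \<in> Xtilde X" by (simp add: Sp_l_def)
    from Xtilde_eq_iota[OF this assms(3) Sp_l_Xtilde_component_subset[OF assms(2) f]]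
    show "f \<in> iota X ` Sp_l X shift" by blast
  qed
  moreover have "iota X ` Sp_l X shift \<subseteq> Sp_l (Xtilde X) (shift_tilde X)"
    by (rule image_Sp_l_subset[OF inj_on_iota])
      (auto simp: iota_mem_Xtilde[OF assms(2)] shift_tilde_iota[OF assms(2)])
  ultimately have eq: "Sp_l (Xtilde X) (shift_tilde X) = iota X ` Sp_l X shift"
    by (rule subset_antisym)
  have "inj_on (iota X) (Sp_l X shift)"
    using inj_on_subset[OF inj_on_iota Sp_l_subset] .
  with eq show ?thesis by (simp add: card_image)
qed

end
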